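(* Fix an even integer $p\geq2$. Let $\mu$ be a probability measure on $\mathbb{R}$ with mean $0$ and finite moments of all orders, and let $w=(w_1,\dots,w_{m_1})$ have i.i.d. components with distribution $\mu$. Let $T_0\subset\mathbb{R}^{m_0}$ be compact and $T_1\subset\mathbb{R}^{m_1}$ be the image of $T_0$ under a map $f\in C^{0,1}(T_0;\mathbb{R}^{m_1})$ with $\|f\|_{C^{0,1}(T_0;\mathbb{R}^{m_1})}\leq\lambda$. Then there is a constant $C=C(T_0,p,\mu,\lambda)$ such that for all $m_1\geq1$, $\mathbb{E}\big[\sup_{y\in T_1}|w\cdot y|^p\big]\leq C$.
   Context: $\|f\|_{C^{0,1}(T_0;\mathbb{R}^{m})}=\sup_{x\in T_0}|f(x)|+\sup_{x\neq y}|f(x)-f(y)|/|x-y|$, with Euclidean norms. *)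

theory Defs
  imports "HOL-Probability.Probability"
begin

text \<open>Vectors in R^m are represented as functions nat \<Rightarrow> real, only coordinates i < m matter.\<close>

definition vnorm :: "nat \<Rightarrow> (nat \<Rightarrow> real) \<Rightarrow> real" where
  "vnorm m y = sqrt (\<Sum>i<m. (y i)\<^sup>2)"

definition vdot :: "nat \<Rightarrow> (nat \<Rightarrow> real) \<Rightarrow> (nat \<Rightarrow> real) \<Rightarrow> real" where
  "vdot m w y = (\<Sum>i<m. w i * y i)"

text \<open>The C^{0,1} norm (sup norm plus Lipschitz seminorm, Euclidean norms), valued in
  ennreal so that it is infinite exactly when f is not in C^{0,1}(T0; R^m).\<close>

definition c01_norm :: "'a::euclidean_space set \<Rightarrow> nat \<Rightarrow> ('a \<Rightarrow> nat \<Rightarrow> real) \<Rightarrow> ennreal" where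
  "c01_norm T0 m f =
     (SUP x\<in>T0. ennreal (vnorm m (f x))) +
     (SUP xy\<in>{(x, y). x \<in> T0 \<and> y \<in> T0 \<and> x \<noteq> y}.
        ennreal (vnorm m (\<lambda>i. f (fst xy) i - f (snd xy) i) / norm (fst xy - snd xy)))"

end

theory Submission
  imports Defs
begin

text \<open>
  For a fixed vector \<open>y\<close>, the even moments of \<open>w \<bullet> y\<close> satisfy a Marcinkiewicz-Zygmund
  inequality \<open>E (w \<bullet> y)\<^bsup>2r\<^esup> \<le> (C\<^sub>r |y|)\<^bsup>2r\<^esup>\<close> with \<open>C\<^sub>r\<close> independent of the dimension; it
  follows by induction on the dimension, using only that \<open>\<mu>\<close> is centred with finite moments.
  The supremum over \<open>f(T\<^sub>0)\<close> is controlled by chaining: the bounded set \<open>T\<^sub>0 \<subseteq> \<real>\<^sup>d\<close> has nets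
  \<open>N\<^sub>k\<close> at scale \<open>4\<^sup>-\<^sup>k\<close> with \<open>O(4\<^bsup>kd\<^esup>)\<close> points, and \<open>|w \<bullet> f(x)|\<^bsup>2r\<^esup>\<close> is bounded by a
  weighted sum over the links between consecutive nets. As \<open>f\<close> is Lipschitz, a link at level
  \<open>k\<close> contributes \<open>O(4\<^bsup>-2rk\<^esup>)\<close> in expectation, which beats the \<open>O(16\<^bsup>kd\<^esup>)\<close> links once
  \<open>2r > 4d\<close>. Finally \<open>|v|\<^sup>p \<le> 1 + |v|\<^bsup>2r\<^esup>\<close> for \<open>p \<le> 2r\<close>.
\<close>

lemma weighted_sum_power_le_sum_power:
  fixes b c :: "'i \<Rightarrow> real"
  assumes "finite I" "I \<noteq> {}" and b: "\<And>i. i \<in> I \<Longrightarrow> 0 \<le> b i"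
    and c: "\<And>i. i \<in> I \<Longrightarrow> 0 \<le> c i" "(\<Sum>i\<in>I. c i) \<le> 1"
  shows "(\<Sum>i\<in>I. c i * b i) ^ q \<le> (\<Sum>i\<in>I. b i ^ q)"
proof -
  obtain i0 where i0: "i0 \<in> I" "\<And>i. i \<in> I \<Longrightarrow> b i \<le> b i0"
  proof -
    have "Max (b ` I) \<in> b ` I" using assms(1,2) by (intro Max_in) auto
    then obtain i0 where "i0 \<in> I" "b i0 = Max (b ` I)" by auto
    then show ?thesis using that assms(1) by auto
  qed
  have "(\<Sum>i\<in>I. c i * b i) \<le> (\<Sum>i\<in>I. c i * b i0)"
    using c i0 by (intro sum_mono mult_left_mono) auto
  also have "\<dots> = (\<Sum>i\<in>I. c i) * b i0" by (simp add: sum_distrib_right)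
  also have "\<dots> \<le> b i0"
    using c b[OF i0(1)] by (intro mult_left_le_one_le sum_nonneg) auto
  finally have "(\<Sum>i\<in>I. c i * b i) ^ q \<le> b i0 ^ q"
    using b c by (intro power_mono) (auto intro: sum_nonneg)
  also have "\<dots> \<le> (\<Sum>i\<in>I. b i ^ q)"
    using assms(1) b i0 by (intro member_le_sum) auto
  finally show ?thesis .
qed

lemma power_sum_le_sum_card_power:
  fixes b :: "'i \<Rightarrow> real"
  assumes "finite I" "I \<noteq> {}" "\<And>i. i \<in> I \<Longrightarrow> 0 \<le> b i"
  shows "(\<Sum>i\<in>I. b i) ^ q \<le> (\<Sum>i\<in>I. (real (card I) * b i) ^ q)"
  using weighted_sum_power_le_sum_power[of I "\<lambda>i. real (card I) * b i" "\<lambda>_. 1 / real (card I)" q]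
    assms by (simp add: card_gt_0_iff)

lemma power_sum_le_sum_dyadic_power:
  fixes a :: "nat \<Rightarrow> real"
  assumes "\<And>k. 0 \<le> a k"
  shows "(\<Sum>k<Suc n. a k) ^ q \<le> (\<Sum>k<Suc n. (2 ^ (k + 1) * a k) ^ q)"
proof -
  have "(\<Sum>k<Suc n. (1/2::real) ^ (k + 1)) = 1 - (1/2) ^ Suc n"
    by (induction n) (simp_all add: field_simps)
  moreover have "(0::real) \<le> (1/2) ^ Suc n" by simp
  ultimately have "(\<Sum>k<Suc n. (1/2::real) ^ (k + 1)) \<le> 1" by linarith
  then have "(\<Sum>k<Suc n. (1/2) ^ (k + 1) * (2 ^ (k + 1) * a k)) ^ q \<le> (\<Sum>k<Suc n. (2 ^ (k + 1) * a k) ^ q)"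
    using assms by (intro weighted_sum_power_le_sum_power) (auto simp del: sum.lessThan_Suc)
  then show ?thesis by (simp add: power_one_over)
qed

lemma binomial_power_lower_bound:
  fixes a b :: real
  assumes "0 \<le> a" "0 \<le> b" "1 \<le> r"
  shows "a ^ r + max (a ^ (r - 1) * b) (b ^ r) \<le> (a + b) ^ r"
proof -
  have bin: "(a + b) ^ r = (\<Sum>k\<le>r. real (r choose k) * b ^ k * a ^ (r - k))"
    by (subst add.commute) (rule binomial_ring)
  have nn: "\<And>k. 0 \<le> real (r choose k) * b ^ k * a ^ (r - k)" using assms by simp
  have "(\<Sum>k\<in>{0, r}. real (r choose k) * b ^ k * a ^ (r - k)) \<le> (a + b) ^ r"
    unfolding bin by (intro sum_mono2 nn) auto
  then have "a ^ r + b ^ r \<le> (a + b) ^ r" using assms by simp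
  moreover have "(\<Sum>k\<in>{0, 1}. real (r choose k) * b ^ k * a ^ (r - k)) \<le> (a + b) ^ r"
    unfolding bin using assms by (intro sum_mono2 nn) auto
  then have "a ^ r + real r * (a ^ (r - 1) * b) \<le> (a + b) ^ r" using assms by (simp add: mult_ac)
  moreover have "1 * (a ^ (r - 1) * b) \<le> real r * (a ^ (r - 1) * b)"
    using assms by (intro mult_right_mono) auto
  ultimately show ?thesis by simp
qed

lemma mixed_power_le_max:
  fixes s t :: real
  assumes "0 \<le> s" "0 \<le> t" "2 \<le> k" "k \<le> 2 * r"
  shows "t ^ k * s ^ (2 * r - k) \<le> max ((s\<^sup>2) ^ (r - 1) * t\<^sup>2) ((t\<^sup>2) ^ r)"
proof (cases "t \<le> s")
  case True
  have "t ^ k = t\<^sup>2 * t ^ (k - 2)" using assms by (metis le_add_diff_inverse power_add)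
  then have "t ^ k * s ^ (2 * r - k) = t\<^sup>2 * (t ^ (k - 2) * s ^ (2 * r - k))" by simp
  also have "\<dots> \<le> t\<^sup>2 * (s ^ (k - 2) * s ^ (2 * r - k))"
    using assms True by (intro mult_left_mono mult_right_mono power_mono) auto
  also have "\<dots> = (s\<^sup>2) ^ (r - 1) * t\<^sup>2"
    using assms by (simp add: power_add[symmetric] power_mult[symmetric] right_diff_distrib')
  finally show ?thesis by simp
next
  case False
  have "t ^ k * s ^ (2 * r - k) \<le> t ^ k * t ^ (2 * r - k)"
    using assms False by (intro mult_left_mono power_mono) auto
  also have "\<dots> = (t\<^sup>2) ^ r"
    using assms by (simp add: power_add[symmetric] power_mult[symmetric])
  finally show ?thesis by simp
qed

lemma abs_power_le_one_plus_even_power: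
  fixes v :: real
  assumes "p \<le> 2 * r"
  shows "\<bar>v\<bar> ^ p \<le> 1 + \<bar>v\<bar> ^ (2 * r)"
proof (cases "\<bar>v\<bar> \<le> 1")
  case True
  then show ?thesis by (simp add: add_increasing2 power_le_one)
next
  case False
  then show ?thesis using assms by (simp add: add_increasing power_increasing)
qed

lemma vdot_update_last: "vdot (Suc m) (w(m := t)) y = vdot m w y + t * y m"
  unfolding vdot_def by (auto intro!: sum.cong)

lemma vdot_diff: "vdot m w (\<lambda>i. y i - z i) = vdot m w y - vdot m w z"
  unfolding vdot_def by (simp add: right_diff_distrib sum_subtractf)

lemma abs_vdot_le: "\<bar>vdot m w y\<bar> \<le> vnorm m w * vnorm m y"
proof -
  have "(vdot m w y)\<^sup>2 \<le> (\<Sum>i<m. (w i)\<^sup>2) * (\<Sum>i<m. (y i)\<^sup>2)"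
    unfolding vdot_def by (rule Cauchy_Schwarz_ineq_sum)
  then show ?thesis
    unfolding vnorm_def by (metis real_sqrt_abs real_sqrt_le_mono real_sqrt_mult)
qed

lemma vnorm_nonneg: "0 \<le> vnorm m y"
  unfolding vnorm_def by (simp add: sum_nonneg)

lemma vnorm_Suc_square: "(vnorm (Suc m) y)\<^sup>2 = (vnorm m y)\<^sup>2 + (y m)\<^sup>2"
  unfolding vnorm_def by (simp add: sum_nonneg)

lemma vdot_eq_0_if_vnorm_eq_0: "vnorm m y = 0 \<Longrightarrow> vdot m w y = 0"
  unfolding vnorm_def vdot_def by (simp add: sum_nonneg_eq_0_iff)

lemma continuous_on_vdot_comp:
  assumes lip: "\<And>x y. x \<in> T \<Longrightarrow> y \<in> T \<Longrightarrow> vnorm m (\<lambda>i. f x i - f y i) \<le> \<Lambda> * dist x y"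
    and \<Lambda>: "0 \<le> \<Lambda>"
  shows "continuous_on T (\<lambda>x. vdot m w (f x))"
proof (rule lipschitz_on_continuous_on)
  show "lipschitz_on (vnorm m w * \<Lambda>) T (\<lambda>x. vdot m w (f x))"
  proof (rule lipschitz_onI)
    fix x y assume "x \<in> T" "y \<in> T"
    have "dist (vdot m w (f x)) (vdot m w (f y)) = \<bar>vdot m w (\<lambda>i. f x i - f y i)\<bar>"
      by (simp add: vdot_diff dist_real_def)
    also have "\<dots> \<le> vnorm m w * vnorm m (\<lambda>i. f x i - f y i)" by (rule abs_vdot_le)
    also have "\<dots> \<le> vnorm m w * (\<Lambda> * dist x y)"
      using lip[OF \<open>x \<in> T\<close> \<open>y \<in> T\<close>] by (intro mult_left_mono) (auto simp: vnorm_nonneg)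
    finally show "dist (vdot m w (f x)) (vdot m w (f y)) \<le> vnorm m w * \<Lambda> * dist x y"
      by (simp add: mult.assoc)
  qed (use \<Lambda> vnorm_nonneg in simp)
qed

lemma c01_norm_leD:
  assumes "c01_norm T0 m f \<le> ennreal lam"
  shows "\<And>x. x \<in> T0 \<Longrightarrow> vnorm m (f x) \<le> max lam 0"
    and "\<And>x y. x \<in> T0 \<Longrightarrow> y \<in> T0 \<Longrightarrow> vnorm m (\<lambda>i. f x i - f y i) \<le> max lam 0 * dist x y"
proof -
  have le_max: "a \<le> max lam 0" if "ennreal a \<le> ennreal lam" "0 \<le> a" for a
    using that by (cases "0 \<le> lam") (auto simp: ennreal_neg)
  let ?sup = "SUP x\<in>T0. ennreal (vnorm m (f x))"
  let ?lip = "SUP xy\<in>{(x, y). x \<in> T0 \<and> y \<in> T0 \<and> x \<noteq> y}.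
      ennreal (vnorm m (\<lambda>i. f (fst xy) i - f (snd xy) i) / norm (fst xy - snd xy))"
  have sum: "?sup + ?lip \<le> ennreal lam" using assms unfolding c01_norm_def .
  have sup: "?sup \<le> ennreal lam" by (rule order_trans[OF add_increasing2[OF zero_le order_refl] sum])
  have lip: "?lip \<le> ennreal lam" by (rule order_trans[OF add_increasing[OF zero_le order_refl] sum])
  fix x assume x: "x \<in> T0"
  have "ennreal (vnorm m (f x)) \<le> ?sup" using x by (rule SUP_upper)
  then show "vnorm m (f x) \<le> max lam 0" using sup by (intro le_max vnorm_nonneg) auto
  fix y assume y: "y \<in> T0"
  show "vnorm m (\<lambda>i. f x i - f y i) \<le> max lam 0 * dist x y"
  proof (cases "x = y")
    case True
    then show ?thesis unfolding vnorm_def by simp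
  next
    case False
    have "ennreal (vnorm m (\<lambda>i. f x i - f y i) / norm (x - y)) \<le> ?lip"
      using x y False by (intro SUP_upper2[of "(x, y)"]) auto
    then have "vnorm m (\<lambda>i. f x i - f y i) / norm (x - y) \<le> max lam 0"
      using lip by (intro le_max) (auto simp: vnorm_nonneg)
    then show ?thesis using False by (simp add: dist_norm divide_le_eq)
  qed
qed

section \<open>Moments of linear forms in i.i.d. centred variables\<close>

lemma (in prob_space) abs_moment_le_even_moment:
  fixes X :: "'a \<Rightarrow> real"
  assumes X: "integrable M (\<lambda>x. X x ^ (2 * r))" "integrable M (\<lambda>x. \<bar>X x\<bar> ^ j)"
    and c: "0 < c" "expectation (\<lambda>x. X x ^ (2 * r)) \<le> c ^ (2 * r)" and j: "j \<le> 2 * r"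
  shows "expectation (\<lambda>x. \<bar>X x\<bar> ^ j) \<le> 2 * c ^ j"
proof -
  have split: "c ^ (2 * r) = c ^ j * c ^ (2 * r - j)" using j by (simp add: power_add[symmetric])
  have pointwise: "\<bar>v\<bar> ^ j \<le> c ^ j + v ^ (2 * r) / c ^ (2 * r - j)" for v :: real
  proof (cases "\<bar>v\<bar> \<le> c")
    case True
    then show ?thesis by (intro add_increasing2 power_mono) (auto simp: zero_le_even_power)
  next
    case False
    have "\<bar>v\<bar> ^ j * c ^ (2 * r - j) \<le> \<bar>v\<bar> ^ j * \<bar>v\<bar> ^ (2 * r - j)"
      using False c by (intro mult_left_mono power_mono) auto
    also have "\<dots> = v ^ (2 * r)" using j by (simp add: power_add[symmetric] power_even_abs)
    finally have "\<bar>v\<bar> ^ j \<le> v ^ (2 * r) / c ^ (2 * r - j)" using c by (simp add: le_divide_eq)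
    then show ?thesis using c by (simp add: add_increasing)
  qed
  have "expectation (\<lambda>x. \<bar>X x\<bar> ^ j) \<le> expectation (\<lambda>x. c ^ j + X x ^ (2 * r) / c ^ (2 * r - j))"
    using X by (intro integral_mono pointwise) auto
  also have "\<dots> = c ^ j + expectation (\<lambda>x. X x ^ (2 * r)) / c ^ (2 * r - j)"
    using X by (simp add: prob_space)
  also have "\<dots> \<le> c ^ j + c ^ (2 * r) / c ^ (2 * r - j)"
    using c by (intro add_left_mono divide_right_mono) auto
  also have "\<dots> = c ^ j + c ^ j"
    using c by (simp add: split)
  finally show ?thesis by simp
qed

lemma moment_induction_step_le:
  fixes L s t :: real
  assumes r: "1 \<le> r" and L: "1 \<le> L"
  shows "(L * s) ^ (2 * r) + (L - 1) * (L ^ (2 * r - 2) * max ((s\<^sup>2) ^ (r - 1) * t\<^sup>2) ((t\<^sup>2) ^ r))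
    \<le> L ^ (2 * r) * (s\<^sup>2 + t\<^sup>2) ^ r"
proof -
  define M where "M = max ((s\<^sup>2) ^ (r - 1) * t\<^sup>2) ((t\<^sup>2) ^ r)"
  have M: "0 \<le> M" unfolding M_def by (simp add: le_max_iff_disj)
  have "L \<le> L * L" using L by (simp add: mult_le_cancel_left1)
  then have "L - 1 \<le> L\<^sup>2" unfolding power2_eq_square by linarith
  then have "(L - 1) * L ^ (2 * r - 2) \<le> L\<^sup>2 * L ^ (2 * r - 2)"
    by (rule mult_right_mono) (use L in simp)
  also have "\<dots> = L ^ (2 * r)"
    using r by (cases r) (simp_all add: power2_eq_square)
  finally have "(L * s) ^ (2 * r) + (L - 1) * (L ^ (2 * r - 2) * M) \<le> (L * s) ^ (2 * r) + L ^ (2 * r) * M"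
    using M by (simp add: mult.assoc[symmetric] mult_right_mono)
  also have "\<dots> = L ^ (2 * r) * (s ^ (2 * r) + M)"
    by (simp add: power_mult_distrib algebra_simps)
  also have "\<dots> \<le> L ^ (2 * r) * (s\<^sup>2 + t\<^sup>2) ^ r"
    using L r unfolding M_def power_mult by (intro mult_left_mono binomial_power_lower_bound) auto
  finally show ?thesis unfolding M_def .
qed

locale centered_iid =
  fixes \<mu> :: "real measure"
  assumes prob_space_mu: "prob_space \<mu>" and sets_mu: "sets \<mu> = sets borel"
    and mean_zero: "(\<integral>x. x \<partial>\<mu>) = 0"
    and integrable_abs_power: "\<And>k::nat. integrable \<mu> (\<lambda>x. \<bar>x\<bar> ^ k)"
begin

abbreviation iid :: "nat \<Rightarrow> (nat \<Rightarrow> real) measure" where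
  "iid m \<equiv> PiM {..<m} (\<lambda>_. \<mu>)"

lemma prob_space_iid: "prob_space (iid m)"
  by (intro prob_space_PiM prob_space_mu)

lemma integrable_power: "integrable \<mu> (\<lambda>x. x ^ k)"
proof -
  have "(\<lambda>x. x ^ k) \<in> borel_measurable \<mu>"
    by (simp add: measurable_cong_sets[OF sets_mu refl])
  then show ?thesis
    using integrable_abs_power[of k] by (simp add: power_abs[symmetric] integrable_abs_iff)
qed

lemma measurable_component: "i < m \<Longrightarrow> (\<lambda>w. w i) \<in> measurable (iid m) \<mu>"
  by (intro measurable_component_singleton) auto

lemma borel_measurable_component: "i < m \<Longrightarrow> (\<lambda>w. w i) \<in> borel_measurable (iid m)"
  using measurable_component by (simp add: measurable_cong_sets[OF refl sets_mu])

lemma borel_measurable_vdot [measurable]: "(\<lambda>w. vdot m w y) \<in> borel_measurable (iid m)"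
  unfolding vdot_def by (intro borel_measurable_sum borel_measurable_times measurable_const
    borel_measurable_component) auto

lemma integrable_abs_component_power: "i < m \<Longrightarrow> integrable (iid m) (\<lambda>w. \<bar>w i\<bar> ^ j)"
proof -
  assume i: "i < m"
  have "(\<lambda>x::real. \<bar>x\<bar> ^ j) \<in> borel_measurable \<mu>"
    by (simp add: measurable_cong_sets[OF sets_mu refl])
  note integrable_distr_eq[OF measurable_component[OF i] this]
  moreover have "distr (iid m) \<mu> (\<lambda>w. w i) = \<mu>"
    using i by (intro distr_PiM_component prob_space_mu) auto
  ultimately show ?thesis
    using integrable_abs_power[of j] by simp
qed

lemma integrable_abs_vdot_power: "integrable (iid m) (\<lambda>w. \<bar>vdot m w y\<bar> ^ j)"
proof (cases "m = 0")
  case True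
  interpret prob_space "iid m" by (rule prob_space_iid)
  have "(\<lambda>w. \<bar>vdot m w y\<bar> ^ j) = (\<lambda>_. 0 ^ j)" using True by (simp add: vdot_def)
  then show ?thesis by simp
next
  case False
  show ?thesis
  proof (rule Bochner_Integration.integrable_bound)
    show "integrable (iid m) (\<lambda>w. \<Sum>i<m. (real m * \<bar>y i\<bar>) ^ j * \<bar>w i\<bar> ^ j)"
      by (intro Bochner_Integration.integrable_sum Bochner_Integration.integrable_mult_right
          integrable_abs_component_power) auto
    have "\<bar>vdot m w y\<bar> ^ j \<le> (\<Sum>i<m. (real m * \<bar>y i\<bar>) ^ j * \<bar>w i\<bar> ^ j)" for w
    proof -
      have "\<bar>vdot m w y\<bar> ^ j \<le> (\<Sum>i<m. \<bar>w i * y i\<bar>) ^ j"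
        unfolding vdot_def by (intro power_mono sum_abs) auto
      also have "\<dots> \<le> (\<Sum>i<m. (real (card {..<m}) * \<bar>w i * y i\<bar>) ^ j)"
        using False by (intro power_sum_le_sum_card_power) auto
      finally show ?thesis by (simp add: abs_mult power_mult_distrib mult_ac)
    qed
    then show "AE w in iid m. norm (\<bar>vdot m w y\<bar> ^ j) \<le> norm (\<Sum>i<m. (real m * \<bar>y i\<bar>) ^ j * \<bar>w i\<bar> ^ j)"
      by (intro AE_I2) (simp add: sum_nonneg)
  qed simp
qed

lemma integrable_vdot_power: "integrable (iid m) (\<lambda>w. vdot m w y ^ j)"
  using integrable_abs_vdot_power[of m y j]
  by (simp add: power_abs[symmetric] integrable_abs_iff)

lemma moment_vdot_Suc:
  "(\<integral>w. vdot (Suc m) w y ^ n \<partial>iid (Suc m)) =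
   (\<Sum>k\<le>n. real (n choose k) * y m ^ k * (\<integral>t. t ^ k \<partial>\<mu>) * (\<integral>w. vdot m w y ^ (n - k) \<partial>iid m))"
proof -
  interpret mu: prob_space \<mu> by (rule prob_space_mu)
  interpret product_sigma_finite "\<lambda>_::nat. \<mu>"
    by (simp add: product_sigma_finite_def mu.sigma_finite_measure_axioms)
  have insert_m: "{..<Suc m} = insert m {..<m}" by auto
  have "(\<integral>w. vdot (Suc m) w y ^ n \<partial>iid (Suc m)) =
     (\<integral>w. (\<integral>t. vdot (Suc m) (w(m := t)) y ^ n \<partial>\<mu>) \<partial>iid m)"
    unfolding insert_m using integrable_vdot_power[of "Suc m" y n]
    by (intro product_integral_insert) (auto simp: insert_m)
  also have "\<dots> = (\<integral>w. (\<Sum>k\<le>n. (real (n choose k) * y m ^ k * (\<integral>t. t ^ k \<partial>\<mu>)) * vdot m w y ^ (n - k)) \<partial>iid m)"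
  proof (rule Bochner_Integration.integral_cong[OF refl])
    fix w
    have "(\<integral>t. vdot (Suc m) (w(m := t)) y ^ n \<partial>\<mu>) =
        (\<integral>t. (\<Sum>k\<le>n. (real (n choose k) * y m ^ k * vdot m w y ^ (n - k)) * t ^ k) \<partial>\<mu>)"
      unfolding vdot_update_last add.commute[of "vdot m w y"] binomial_ring
      by (intro Bochner_Integration.integral_cong refl sum.cong) (auto simp: power_mult_distrib mult_ac)
    also have "\<dots> = (\<Sum>k\<le>n. (real (n choose k) * y m ^ k * vdot m w y ^ (n - k)) * (\<integral>t. t ^ k \<partial>\<mu>))"
      by (simp add: integrable_power)
    finally show "(\<integral>t. vdot (Suc m) (w(m := t)) y ^ n \<partial>\<mu>) =
        (\<Sum>k\<le>n. (real (n choose k) * y m ^ k * (\<integral>t. t ^ k \<partial>\<mu>)) * vdot m w y ^ (n - k))"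
      by (simp add: mult_ac)
  qed
  also have "\<dots> = (\<Sum>k\<le>n. real (n choose k) * y m ^ k * (\<integral>t. t ^ k \<partial>\<mu>) * (\<integral>w. vdot m w y ^ (n - k) \<partial>iid m))"
    by (simp add: integrable_vdot_power)
  finally show ?thesis .
qed

lemma abs_moment_vdot_le:
  assumes L: "1 \<le> L" and even: "(\<integral>w. vdot m w y ^ (2 * r) \<partial>iid m) \<le> (L * vnorm m y) ^ (2 * r)"
    and j: "j \<le> 2 * r"
  shows "(\<integral>w. \<bar>vdot m w y\<bar> ^ j \<partial>iid m) \<le> 2 * (L * vnorm m y) ^ j"
proof -
  interpret prob_space "iid m" by (rule prob_space_iid)
  show ?thesis
  proof (cases "vnorm m y = 0")
    case True
    then show ?thesis by (simp add: vdot_eq_0_if_vnorm_eq_0 prob_space power_0_left)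
  next
    case False
    then have "0 < L * vnorm m y" using L vnorm_nonneg[of m y] by simp
    then show ?thesis
      using even j integrable_vdot_power[of m y "2 * r"] integrable_abs_vdot_power[of m y j]
      by (intro abs_moment_le_even_moment)
  qed
qed

lemma moment_vdot_term_le:
  assumes L: "1 \<le> L" and even: "(\<integral>w. vdot m w y ^ (2 * r) \<partial>iid m) \<le> (L * vnorm m y) ^ (2 * r)"
    and k: "2 \<le> k" "k \<le> 2 * r"
  shows "real (2 * r choose k) * y m ^ k * (\<integral>t. t ^ k \<partial>\<mu>) * (\<integral>w. vdot m w y ^ (2 * r - k) \<partial>iid m)
    \<le> 2 * real (2 * r choose k) * (\<integral>t. \<bar>t\<bar> ^ k \<partial>\<mu>) *
       (L ^ (2 * r - 2) * max ((vnorm m y)\<^sup>2 ^ (r - 1) * (y m)\<^sup>2) ((y m)\<^sup>2 ^ r))"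
proof -
  define s t where "s = vnorm m y" and "t = \<bar>y m\<bar>"
  have st: "0 \<le> s" "0 \<le> t" unfolding s_def t_def by (simp_all add: vnorm_nonneg)
  have "real (2 * r choose k) * y m ^ k * (\<integral>t. t ^ k \<partial>\<mu>) * (\<integral>w. vdot m w y ^ (2 * r - k) \<partial>iid m)
      \<le> real (2 * r choose k) * t ^ k * \<bar>\<integral>t. t ^ k \<partial>\<mu>\<bar> * \<bar>\<integral>w. vdot m w y ^ (2 * r - k) \<partial>iid m\<bar>"
    unfolding t_def by (rule order_trans[OF abs_ge_self]) (simp add: abs_mult power_abs)
  also have "\<dots> \<le> real (2 * r choose k) * t ^ k * (\<integral>t. \<bar>t\<bar> ^ k \<partial>\<mu>) * (2 * (L * s) ^ (2 * r - k))"
  proof (intro mult_mono mult_nonneg_nonneg)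
    show "\<bar>\<integral>t. t ^ k \<partial>\<mu>\<bar> \<le> (\<integral>t. \<bar>t\<bar> ^ k \<partial>\<mu>)"
      by (rule order_trans[OF integral_abs_bound]) (simp add: power_abs)
    have "\<bar>\<integral>w. vdot m w y ^ (2 * r - k) \<partial>iid m\<bar> \<le> (\<integral>w. \<bar>vdot m w y\<bar> ^ (2 * r - k) \<partial>iid m)"
      by (rule order_trans[OF integral_abs_bound]) (simp add: power_abs)
    also have "\<dots> \<le> 2 * (L * s) ^ (2 * r - k)"
      unfolding s_def using L even by (rule abs_moment_vdot_le) simp
    finally show "\<bar>\<integral>w. vdot m w y ^ (2 * r - k) \<partial>iid m\<bar> \<le> 2 * (L * s) ^ (2 * r - k)" .
  qed (use st in auto)
  also have "\<dots> = 2 * real (2 * r choose k) * (\<integral>t. \<bar>t\<bar> ^ k \<partial>\<mu>) * (L ^ (2 * r - k) * (t ^ k * s ^ (2 * r - k)))"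
    by (simp add: power_mult_distrib mult_ac)
  also have "\<dots> \<le> 2 * real (2 * r choose k) * (\<integral>t. \<bar>t\<bar> ^ k \<partial>\<mu>) *
       (L ^ (2 * r - 2) * max ((s\<^sup>2) ^ (r - 1) * t\<^sup>2) ((t\<^sup>2) ^ r))"
    using L k st by (intro mult_left_mono mult_mono power_increasing mixed_power_le_max) auto
  finally show ?thesis unfolding s_def t_def by simp
qed

definition mz_const :: "nat \<Rightarrow> real" where
  "mz_const r = 1 + (\<Sum>k\<in>{2..2 * r}. 2 * real (2 * r choose k) * (\<integral>t. \<bar>t\<bar> ^ k \<partial>\<mu>))"

lemma mz_const_ge_1: "1 \<le> mz_const r"
  unfolding mz_const_def by (simp add: sum_nonneg)

text \<open>Induction on the dimension: expanding \<open>(S + t w\<^sub>m)\<^bsup>2r\<^esup>\<close> binomially, the term linear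
  in \<open>w\<^sub>m\<close> vanishes because \<open>\<mu>\<close> is centred, and the terms of order \<open>k \<ge> 2\<close> only involve lower
  moments of \<open>S\<close>, which the induction hypothesis controls.\<close>

theorem even_moment_vdot_le:
  assumes r: "1 \<le> r"
  shows "(\<integral>w. vdot m w y ^ (2 * r) \<partial>iid m) \<le> (mz_const r * vnorm m y) ^ (2 * r)"
proof (induction m)
  case 0
  interpret prob_space "iid 0" by (rule prob_space_iid)
  show ?case using r by (simp add: vdot_def vnorm_def prob_space power_0_left)
next
  case (Suc m)
  define L where "L = mz_const r"
  define s t where "s = vnorm m y" and "t = y m"
  define M where "M = max ((s\<^sup>2) ^ (r - 1) * t\<^sup>2) ((t\<^sup>2) ^ r)"
  define h where "h k = 2 * real (2 * r choose k) * (\<integral>t. \<bar>t\<bar> ^ k \<partial>\<mu>)" for k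
  have L: "1 \<le> L" unfolding L_def by (rule mz_const_ge_1)
  have "(\<Sum>k\<le>2 * r. if k < 2 then 0 else h k) = (\<Sum>k\<in>{2..2 * r}. h k)"
    by (rule sum.mono_neutral_cong_right) auto
  then have L_minus_1: "L - 1 = (\<Sum>k\<le>2 * r. if k < 2 then 0 else h k)"
    unfolding L_def mz_const_def h_def by simp
  have IH: "(\<integral>w. vdot m w y ^ (2 * r) \<partial>iid m) \<le> (L * s) ^ (2 * r)"
    using Suc unfolding L_def s_def .
  define g where "g k = (if k = 0 then (L * s) ^ (2 * r) else 0) + (if k < 2 then 0 else h k) * (L ^ (2 * r - 2) * M)" for k
  have term_le: "real (2 * r choose k) * t ^ k * (\<integral>t. t ^ k \<partial>\<mu>) * (\<integral>w. vdot m w y ^ (2 * r - k) \<partial>iid m) \<le> g k"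
    if "k \<le> 2 * r" for k
  proof -
    interpret prob_space \<mu> by (rule prob_space_mu)
    consider "k = 0" | "k = 1" | "2 \<le> k" by linarith
    then show ?thesis
    proof cases
      case 3
      then show ?thesis using moment_vdot_term_le[OF L IH[unfolded s_def] 3 that]
        by (simp add: g_def h_def s_def t_def M_def)
    qed (use IH mean_zero in \<open>simp_all add: g_def prob_space\<close>)
  qed
  have "(\<integral>w. vdot (Suc m) w y ^ (2 * r) \<partial>iid (Suc m)) \<le> (\<Sum>k\<le>2 * r. g k)"
    unfolding moment_vdot_Suc t_def[symmetric] by (intro sum_mono term_le) auto
  also have "\<dots> = (L * s) ^ (2 * r) + (L - 1) * (L ^ (2 * r - 2) * M)"
    unfolding g_def sum.distrib L_minus_1 sum_distrib_right by simp
  also have "\<dots> \<le> L ^ (2 * r) * (s\<^sup>2 + t\<^sup>2) ^ r"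
    unfolding M_def using r L by (rule moment_induction_step_le)
  also have "\<dots> = (L * vnorm (Suc m) y) ^ (2 * r)"
    unfolding power_mult_distrib power_mult vnorm_Suc_square s_def t_def ..
  finally show ?case unfolding L_def .
qed

lemma nn_integral_sum_abs_vdot_power_le:
  assumes S: "finite S" and c: "0 \<le> c" and r: "1 \<le> r"
    and Z: "\<And>s. s \<in> S \<Longrightarrow> vnorm m (z s) \<le> Z"
  shows "(\<integral>\<^sup>+ w. ennreal (c * (\<Sum>s\<in>S. \<bar>vdot m w (z s)\<bar> ^ (2 * r))) \<partial>iid m)
    \<le> ennreal (c * real (card S) * (mz_const r * Z) ^ (2 * r))"
proof -
  have "(\<integral>\<^sup>+ w. ennreal (c * (\<Sum>s\<in>S. \<bar>vdot m w (z s)\<bar> ^ (2 * r))) \<partial>iid m)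
      = ennreal (c * (\<Sum>s\<in>S. \<integral>w. vdot m w (z s) ^ (2 * r) \<partial>iid m))"
    using c by (subst nn_integral_eq_integral)
      (auto intro!: AE_I2 mult_nonneg_nonneg sum_nonneg
        simp: power_even_abs zero_le_even_power integrable_vdot_power)
  also have "\<dots> \<le> ennreal (c * (\<Sum>s\<in>S. (mz_const r * Z) ^ (2 * r)))"
  proof (intro ennreal_leI mult_left_mono sum_mono c)
    fix s assume "s \<in> S"
    have "(\<integral>w. vdot m w (z s) ^ (2 * r) \<partial>iid m) \<le> (mz_const r * vnorm m (z s)) ^ (2 * r)"
      using r by (rule even_moment_vdot_le)
    also have "\<dots> \<le> (mz_const r * Z) ^ (2 * r)"
      using Z[OF \<open>s \<in> S\<close>] mz_const_ge_1[of r] vnorm_nonneg[of m "z s"]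
      by (intro power_mono mult_left_mono) auto
    finally show "(\<integral>w. vdot m w (z s) ^ (2 * r) \<partial>iid m) \<le> (mz_const r * Z) ^ (2 * r)" .
  qed
  finally show ?thesis by (simp add: mult.assoc)
qed

end

section \<open>Nets of bounded sets\<close>

lemma net_from_finite_cover:
  fixes T G :: "'a::metric_space set"
  assumes G: "finite G" and cover: "\<And>x. x \<in> T \<Longrightarrow> \<exists>g\<in>G. dist x g \<le> \<rho>"
  obtains N where "finite N" "N \<subseteq> T" "card N \<le> card G" "\<And>x. x \<in> T \<Longrightarrow> \<exists>a\<in>N. dist x a \<le> 2 * \<rho>"
proof
  define G' where "G' = {g\<in>G. \<exists>a\<in>T. dist a g \<le> \<rho>}"
  define pick where "pick g = (SOME a. a \<in> T \<and> dist a g \<le> \<rho>)" for g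
  have pick: "pick g \<in> T \<and> dist (pick g) g \<le> \<rho>" if "g \<in> G'" for g
    using that unfolding G'_def pick_def by (metis (mono_tags, lifting) mem_Collect_eq someI)
  have "finite G'" using G unfolding G'_def by simp
  then show "finite (pick ` G')" by simp
  show "pick ` G' \<subseteq> T" using pick by auto
  have "card (pick ` G') \<le> card G'" using \<open>finite G'\<close> by (rule card_image_le)
  also have "\<dots> \<le> card G" using G unfolding G'_def by (intro card_mono) auto
  finally show "card (pick ` G') \<le> card G" .
  fix x assume x: "x \<in> T"
  obtain g where g: "g \<in> G" "dist x g \<le> \<rho>" using cover[OF x] by auto
  then have "g \<in> G'" using x unfolding G'_def by auto
  have "dist x (pick g) \<le> dist x g + dist (pick g) g" by (metis dist_commute dist_triangle)
  also have "\<dots> \<le> 2 * \<rho>" using g pick[OF \<open>g \<in> G'\<close>] by simp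
  finally show "\<exists>a\<in>pick ` G'. dist x a \<le> 2 * \<rho>" using \<open>g \<in> G'\<close> by auto
qed

lemma dist_floor_grid_le:
  fixes x :: "'a::euclidean_space"
  assumes \<delta>: "0 < \<delta>"
  shows "dist x (\<Sum>b\<in>Basis. (\<delta> * of_int \<lfloor>(x \<bullet> b) / \<delta>\<rfloor>) *\<^sub>R b) \<le> real DIM('a) * \<delta>"
    (is "dist x ?g \<le> _")
proof -
  have "dist x ?g \<le> (\<Sum>b\<in>Basis. \<bar>(x - ?g) \<bullet> b\<bar>)"
    unfolding dist_norm by (rule norm_le_l1)
  also have "\<dots> \<le> (\<Sum>b\<in>(Basis::'a set). \<delta>)"
  proof (intro sum_mono)
    fix b :: 'a assume b: "b \<in> Basis"
    have floor_le: "of_int \<lfloor>(x \<bullet> b) / \<delta>\<rfloor> \<le> (x \<bullet> b) / \<delta>"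
      and less_floor: "(x \<bullet> b) / \<delta> < of_int \<lfloor>(x \<bullet> b) / \<delta>\<rfloor> + 1"
      by linarith+
    have "(x - ?g) \<bullet> b = x \<bullet> b - \<delta> * \<lfloor>(x \<bullet> b) / \<delta>\<rfloor>"
      using b by (simp add: inner_diff_left inner_sum_left inner_Basis if_distrib sum.delta cong: if_cong)
    moreover have "\<delta> * \<lfloor>(x \<bullet> b) / \<delta>\<rfloor> \<le> x \<bullet> b"
      using mult_left_mono[OF floor_le, of \<delta>] \<delta> by simp
    moreover have "x \<bullet> b < \<delta> * \<lfloor>(x \<bullet> b) / \<delta>\<rfloor> + \<delta>"
      using mult_strict_left_mono[OF less_floor \<delta>] \<delta> by (simp add: distrib_left)
    ultimately show "\<bar>(x - ?g) \<bullet> b\<bar> \<le> \<delta>" by simp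
  qed
  also have "\<dots> = real DIM('a) * \<delta>" by simp
  finally show ?thesis .
qed

lemma grid_cover:
  fixes T :: "'a::euclidean_space set"
  assumes T: "T \<subseteq> cball 0 R" and R: "0 \<le> R" and \<delta>: "0 < \<delta>"
  obtains G where "finite G" "real (card G) \<le> (2 * R / \<delta> + 4) ^ DIM('a)"
    "\<And>x. x \<in> T \<Longrightarrow> \<exists>g\<in>G. dist x g \<le> real DIM('a) * \<delta>"
proof
  define M :: int where "M = \<lceil>R / \<delta>\<rceil>"
  define J where "J = {-M-1..M}"
  define grid where "grid j = (\<Sum>b\<in>Basis. (\<delta> * of_int (j b)) *\<^sub>R b)" for j :: "'a \<Rightarrow> int"
  show "finite (grid ` (Basis \<rightarrow>\<^sub>E J))" unfolding J_def by (intro finite_imageI finite_PiE) auto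
  have "0 \<le> R / \<delta>" using R \<delta> by simp
  then have "0 \<le> M" unfolding M_def by simp
  have "real (card J) = 2 * real_of_int M + 2" unfolding J_def using \<open>0 \<le> M\<close> by simp
  also have "\<dots> \<le> 2 * R / \<delta> + 4" unfolding M_def by linarith
  finally have card_J: "real (card J) \<le> 2 * R / \<delta> + 4" .
  have "card (grid ` (Basis \<rightarrow>\<^sub>E J)) \<le> card ((Basis::'a set) \<rightarrow>\<^sub>E J)"
    unfolding J_def by (rule card_image_le) (auto intro: finite_PiE)
  also have "\<dots> = card J ^ DIM('a)" by (simp add: card_PiE)
  finally show "real (card (grid ` (Basis \<rightarrow>\<^sub>E J))) \<le> (2 * R / \<delta> + 4) ^ DIM('a)"
    by (smt (verit) card_J of_nat_0_le_iff of_nat_le_iff of_nat_power power_mono)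
  fix x assume x: "x \<in> T"
  define j where "j = (\<lambda>b\<in>Basis. \<lfloor>(x \<bullet> b) / \<delta>\<rfloor>)"
  have "\<lfloor>(x \<bullet> b) / \<delta>\<rfloor> \<in> J" if b: "b \<in> Basis" for b
  proof -
    have "\<bar>x \<bullet> b\<bar> \<le> R" using Basis_le_norm[OF b, of x] x T by auto
    then have "\<bar>(x \<bullet> b) / \<delta>\<bar> \<le> R / \<delta>" using \<delta> by (simp add: abs_div divide_right_mono)
    moreover have "R / \<delta> \<le> real_of_int M" unfolding M_def by simp
    ultimately show ?thesis unfolding J_def by (simp, linarith)
  qed
  then have "grid j \<in> grid ` (Basis \<rightarrow>\<^sub>E J)" unfolding j_def by auto
  moreover have "grid j = (\<Sum>b\<in>Basis. (\<delta> * of_int \<lfloor>(x \<bullet> b) / \<delta>\<rfloor>) *\<^sub>R b)"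
    unfolding grid_def j_def by (intro sum.cong) auto
  then have "dist x (grid j) \<le> real DIM('a) * \<delta>"
    using dist_floor_grid_le[OF \<delta>, of x] by simp
  ultimately show "\<exists>g\<in>grid ` (Basis \<rightarrow>\<^sub>E J). dist x g \<le> real DIM('a) * \<delta>" by blast
qed

definition quarter_nets :: "'a::metric_space set \<Rightarrow> (nat \<Rightarrow> 'a set) \<Rightarrow> bool" where
  "quarter_nets T N \<longleftrightarrow> (\<forall>k. finite (N k) \<and> N k \<subseteq> T \<and> (\<forall>x\<in>T. \<exists>a\<in>N k. dist x a \<le> (1/4) ^ k))"

lemma quarter_netsD:
  assumes "quarter_nets T N"
  shows "finite (N k)" "N k \<subseteq> T" "x \<in> T \<Longrightarrow> \<exists>a\<in>N k. dist x a \<le> (1/4) ^ k"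
  using assms unfolding quarter_nets_def by auto

lemma bounded_imp_quarter_nets:
  fixes T :: "'a::euclidean_space set"
  assumes "bounded T"
  obtains N C where "quarter_nets T N" "1 \<le> C" "\<And>k. real (card (N k)) \<le> C * (4 ^ DIM('a)) ^ k"
proof -
  obtain R where R: "0 < R" "T \<subseteq> cball 0 R"
    using assms by (auto simp: bounded_pos subset_iff)
  define d where "d = real DIM('a)"
  define C where "C = (4 * R * d + 4) ^ DIM('a)"
  have d: "1 \<le> d" unfolding d_def by simp
  have "\<exists>N. finite N \<and> N \<subseteq> T \<and> (\<forall>x\<in>T. \<exists>a\<in>N. dist x a \<le> (1/4) ^ k) \<and>
      real (card N) \<le> C * (4 ^ DIM('a)) ^ k" for k
  proof -
    define \<delta> where "\<delta> = (1/4) ^ k / (2 * d)"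
    have \<delta>: "0 < \<delta>" unfolding \<delta>_def using d by simp
    obtain G where G: "finite G" "real (card G) \<le> (2 * R / \<delta> + 4) ^ DIM('a)"
        "\<And>x. x \<in> T \<Longrightarrow> \<exists>g\<in>G. dist x g \<le> d * \<delta>"
      using grid_cover[OF R(2) _ \<delta>] R(1) unfolding d_def by auto
    obtain N where N: "finite N" "N \<subseteq> T" "card N \<le> card G" "\<And>x. x \<in> T \<Longrightarrow> \<exists>a\<in>N. dist x a \<le> 2 * (d * \<delta>)"
      using net_from_finite_cover[OF G(1,3)] by blast
    have "2 * (d * \<delta>) = (1/4) ^ k" unfolding \<delta>_def using d by simp
    moreover have "real (card N) \<le> C * (4 ^ DIM('a)) ^ k"
    proof -
      have "2 * R / \<delta> + 4 \<le> (4 * R * d + 4) * 4 ^ k"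
        unfolding \<delta>_def using d R(1) by (simp add: field_simps power_one_over)
      then have "(2 * R / \<delta> + 4) ^ DIM('a) \<le> ((4 * R * d + 4) * 4 ^ k) ^ DIM('a)"
        using R(1) \<delta> by (intro power_mono) auto
      also have "\<dots> = C * (4 ^ DIM('a)) ^ k"
        unfolding C_def by (simp add: power_mult_distrib mult.commute flip: power_mult)
      finally show ?thesis using N(3) G(2) by (meson of_nat_le_iff order_trans)
    qed
    ultimately show ?thesis using N by auto
  qed
  then obtain N where "\<forall>k. finite (N k) \<and> N k \<subseteq> T \<and> (\<forall>x\<in>T. \<exists>a\<in>N k. dist x a \<le> (1/4) ^ k) \<and>
      real (card (N k)) \<le> C * (4 ^ DIM('a)) ^ k"
    by metis
  moreover have "1 \<le> C" unfolding C_def using R(1) d by simp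
  ultimately show ?thesis using that unfolding quarter_nets_def by blast
qed

section \<open>Chaining\<close>

text \<open>Nearest points of \<open>x\<close> in consecutive nets are at distance at most
  \<open>4\<^sup>-\<^sup>k + 4\<^bsup>-(k+1)\<^esup> \<le> 2 \<cdot> 4\<^sup>-\<^sup>k\<close>.\<close>

definition chain_pairs :: "(nat \<Rightarrow> 'a::metric_space set) \<Rightarrow> nat \<Rightarrow> ('a \<times> 'a) set" where
  "chain_pairs N k = {(a, b) \<in> N k \<times> N (Suc k). dist a b \<le> 2 * (1/4) ^ k}"

definition chain_term :: "nat \<Rightarrow> (nat \<Rightarrow> 'a::metric_space set) \<Rightarrow> ('a \<Rightarrow> real) \<Rightarrow> nat \<Rightarrow> real" where
  "chain_term q N X k = (case k of
      0 \<Rightarrow> \<Sum>a\<in>N 0. \<bar>X a\<bar> ^ q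
    | Suc j \<Rightarrow> \<Sum>(a, b)\<in>chain_pairs N j. \<bar>X a - X b\<bar> ^ q)"

lemma finite_chain_pairs: "quarter_nets T N \<Longrightarrow> finite (chain_pairs N k)"
  unfolding chain_pairs_def
  by (rule finite_subset[of _ "N k \<times> N (Suc k)"]) (auto simp: quarter_netsD(1))

lemma chain_term_nonneg: "0 \<le> chain_term q N X k"
  unfolding chain_term_def by (cases k) (auto intro: sum_nonneg)

lemma quarter_nets_approximating_sequence:
  assumes N: "quarter_nets T N" and x: "x \<in> T"
  obtains \<pi> where "\<And>k. \<pi> k \<in> N k" "\<And>k. dist x (\<pi> k) \<le> (1/4) ^ k" "\<pi> \<longlonglongrightarrow> x"
proof -
  define \<pi> where "\<pi> k = (SOME a. a \<in> N k \<and> dist x a \<le> (1/4) ^ k)" for k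
  have \<pi>_spec: "\<pi> k \<in> N k \<and> dist x (\<pi> k) \<le> (1/4) ^ k" for k
  proof -
    have "\<exists>a. a \<in> N k \<and> dist x a \<le> (1/4) ^ k" using quarter_netsD(3)[OF N x, of k] by auto
    then show ?thesis unfolding \<pi>_def by (rule someI_ex)
  qed
  have "(\<lambda>n. dist (\<pi> n) x) \<longlonglongrightarrow> 0"
  proof (rule Lim_null_comparison)
    show "\<forall>\<^sub>F n in sequentially. norm (dist (\<pi> n) x) \<le> (1/4) ^ n"
      using \<pi>_spec by (simp add: dist_commute)
    show "(\<lambda>n. (1/4::real) ^ n) \<longlonglongrightarrow> 0" by (rule LIMSEQ_power_zero) simp
  qed
  then have "\<pi> \<longlonglongrightarrow> x" by (rule tendsto_dist_iff[THEN iffD2])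
  with \<pi>_spec show ?thesis using that by blast
qed

lemma chain_link_le:
  assumes N: "quarter_nets T N" and \<pi>: "\<And>k. \<pi> k \<in> N k" "\<And>k. dist x (\<pi> k) \<le> (1/4) ^ k"
  shows "\<bar>X (\<pi> j) - X (\<pi> (Suc j))\<bar> ^ q \<le> chain_term q N X (Suc j)"
proof -
  have "dist (\<pi> j) (\<pi> (Suc j)) \<le> dist x (\<pi> j) + dist x (\<pi> (Suc j))"
    by (rule dist_triangle3)
  also have "\<dots> \<le> 2 * (1/4) ^ j"
  proof -
    have "(1/4::real) ^ Suc j \<le> (1/4) ^ j" by simp
    then show ?thesis using \<pi>(2)[of j] \<pi>(2)[of "Suc j"] by linarith
  qed
  finally have "(\<pi> j, \<pi> (Suc j)) \<in> chain_pairs N j" unfolding chain_pairs_def using \<pi>(1) by auto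
  moreover have "finite (chain_pairs N j)" using N by (rule finite_chain_pairs)
  ultimately have "(\<lambda>(a, b). \<bar>X a - X b\<bar> ^ q) (\<pi> j, \<pi> (Suc j))
      \<le> (\<Sum>p\<in>chain_pairs N j. (\<lambda>(a, b). \<bar>X a - X b\<bar> ^ q) p)"
    by (intro member_le_sum) auto
  then show ?thesis unfolding chain_term_def by simp
qed

text \<open>Telescoping along the net points \<open>\<pi> k \<longlonglongrightarrow> x\<close>; the weights \<open>2\<^bsup>k+1\<^esup>\<close> turn the
  \<open>q\<close>-th power of the sum of the increments into a sum of \<open>q\<close>-th powers.\<close>

lemma chaining_pointwise_bound:
  fixes X :: "'a::metric_space \<Rightarrow> real"
  assumes N: "quarter_nets T N" and X: "continuous_on T X" and x: "x \<in> T"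
  shows "ennreal (\<bar>X x\<bar> ^ q) \<le> (\<Sum>k. ennreal (2 ^ ((k + 1) * q) * chain_term q N X k))"
proof -
  obtain \<pi> where \<pi>: "\<And>k. \<pi> k \<in> N k" "\<And>k. dist x (\<pi> k) \<le> (1/4) ^ k" and lim: "\<pi> \<longlonglongrightarrow> x"
    using quarter_nets_approximating_sequence[OF N x] by blast
  define A where "A k = (case k of 0 \<Rightarrow> \<bar>X (\<pi> 0)\<bar> | Suc j \<Rightarrow> \<bar>X (\<pi> j) - X (\<pi> (Suc j))\<bar>)" for k
  have A_le: "A k ^ q \<le> chain_term q N X k" for k
  proof (cases k)
    case 0
    then show ?thesis
      using \<pi>(1)[of 0] quarter_netsD(1)[OF N] unfolding A_def chain_term_def
      by (auto intro: member_le_sum)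
  qed (simp add: A_def chain_link_le[OF N \<pi>])
  have partial_le: "ennreal (\<bar>X (\<pi> n)\<bar> ^ q) \<le> (\<Sum>k. ennreal (2 ^ ((k + 1) * q) * chain_term q N X k))" for n
  proof -
    have "X (\<pi> n) = X (\<pi> 0) - (\<Sum>k<n. X (\<pi> k) - X (\<pi> (Suc k)))"
      using sum_lessThan_telescope'[of "\<lambda>k. X (\<pi> k)" n] by simp
    then have "\<bar>X (\<pi> n)\<bar> \<le> \<bar>X (\<pi> 0)\<bar> + \<bar>\<Sum>k<n. X (\<pi> k) - X (\<pi> (Suc k))\<bar>"
      by (simp only: abs_triangle_ineq4)
    also have "\<dots> \<le> (\<Sum>k<Suc n. A k)"
      unfolding sum.lessThan_Suc_shift A_def by (simp add: sum_abs)
    finally have "\<bar>X (\<pi> n)\<bar> ^ q \<le> (\<Sum>k<Suc n. A k) ^ q" by (rule power_mono) simp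
    also have "\<dots> \<le> (\<Sum>k<Suc n. (2 ^ (k + 1) * A k) ^ q)"
      by (rule power_sum_le_sum_dyadic_power) (simp add: A_def split: nat.split)
    also have "\<dots> = (\<Sum>k<Suc n. 2 ^ ((k + 1) * q) * A k ^ q)"
      by (simp only: power_mult_distrib power_mult)
    also have "\<dots> \<le> (\<Sum>k<Suc n. 2 ^ ((k + 1) * q) * chain_term q N X k)"
      by (intro sum_mono mult_left_mono A_le) simp
    finally have "ennreal (\<bar>X (\<pi> n)\<bar> ^ q) \<le> ennreal (\<Sum>k<Suc n. 2 ^ ((k + 1) * q) * chain_term q N X k)"
      by (rule ennreal_leI)
    also have "\<dots> = (\<Sum>k<Suc n. ennreal (2 ^ ((k + 1) * q) * chain_term q N X k))"
      by (rule sum_ennreal[symmetric]) (simp add: chain_term_nonneg)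
    also have "\<dots> \<le> (\<Sum>k. ennreal (2 ^ ((k + 1) * q) * chain_term q N X k))"
      by (intro sum_le_suminf summableI) auto
    finally show ?thesis .
  qed
  have "(\<lambda>n. X (\<pi> n)) \<longlonglongrightarrow> X x"
    using quarter_netsD(2)[OF N] \<pi>(1)
    by (intro continuous_on_tendsto_compose[OF X lim x] always_eventually) blast
  then have "(\<lambda>n. ennreal (\<bar>X (\<pi> n)\<bar> ^ q)) \<longlonglongrightarrow> ennreal (\<bar>X x\<bar> ^ q)"
    by (intro tendsto_ennrealI tendsto_intros)
  then show ?thesis
    by (rule LIMSEQ_le_const2) (use partial_le in auto)
qed

lemma sup_abs_vdot_power_le_chain_series:
  assumes N: "quarter_nets T N" and p: "p \<le> 2 * r"
    and lip: "\<And>x y. x \<in> T \<Longrightarrow> y \<in> T \<Longrightarrow> vnorm m (\<lambda>i. f x i - f y i) \<le> \<Lambda> * dist x y"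
    and \<Lambda>: "0 \<le> \<Lambda>"
  shows "(SUP x\<in>T. ennreal (\<bar>vdot m w (f x)\<bar> ^ p))
    \<le> 1 + (\<Sum>k. ennreal (2 ^ ((k + 1) * (2 * r)) * chain_term (2 * r) N (\<lambda>a. vdot m w (f a)) k))"
proof (rule SUP_least)
  fix x assume "x \<in> T"
  have "ennreal (\<bar>vdot m w (f x)\<bar> ^ p) \<le> ennreal (1 + \<bar>vdot m w (f x)\<bar> ^ (2 * r))"
    using p by (intro ennreal_leI abs_power_le_one_plus_even_power)
  also have "\<dots> = 1 + ennreal (\<bar>vdot m w (f x)\<bar> ^ (2 * r))" by simp
  also have "\<dots> \<le> 1 + (\<Sum>k. ennreal (2 ^ ((k + 1) * (2 * r)) * chain_term (2 * r) N (\<lambda>a. vdot m w (f a)) k))"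
    using N continuous_on_vdot_comp[OF lip \<Lambda>] \<open>x \<in> T\<close>
    by (intro add_left_mono chaining_pointwise_bound)
  finally show "ennreal (\<bar>vdot m w (f x)\<bar> ^ p)
      \<le> 1 + (\<Sum>k. ennreal (2 ^ ((k + 1) * (2 * r)) * chain_term (2 * r) N (\<lambda>a. vdot m w (f a)) k))" .
qed

lemma chain_weight_eq:
  fixes j q :: nat and D :: real
  shows "2 ^ ((j + 2) * q) * (D ^ j * D ^ (j + 1)) * (2 * (1/4) ^ j) ^ q
    = D * 8 ^ q * (D\<^sup>2 * (1/2) ^ q) ^ j"
proof -
  have "(j + 2) * q = q * j + q + q" by simp
  then have "(2::real) ^ ((j + 2) * q) = (2 ^ q) ^ j * (2 ^ q * 2 ^ q)"
    by (simp only: power_add power_mult mult.assoc)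
  moreover have "(2 * (1/4::real) ^ j) ^ q = 2 ^ q * ((1/4) ^ q) ^ j"
    by (simp add: power_mult_distrib flip: power_mult) (simp add: mult.commute)
  ultimately have "(2::real) ^ ((j + 2) * q) * (2 * (1/4) ^ j) ^ q
      = (2 ^ q * 2 ^ q * 2 ^ q) * (2 ^ q * (1/4) ^ q) ^ j"
    by (simp only: power_mult_distrib mult_ac)
  also have "\<dots> = 8 ^ q * ((1/2) ^ q) ^ j"
    by (simp flip: power_mult_distrib)
  finally have "(2::real) ^ ((j + 2) * q) * (2 * (1/4) ^ j) ^ q = 8 ^ q * ((1/2) ^ q) ^ j" .
  moreover have "D ^ j * D ^ (j + 1) = D * (D\<^sup>2) ^ j"
    by (simp add: power_mult_distrib[symmetric] power2_eq_square)
  ultimately show ?thesis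
    by (simp only: power_mult_distrib mult_ac)
qed

lemma four_power_square_half_power_le: "((4::real) ^ d)\<^sup>2 * (1/2) ^ (2 * (p + 2 * d + 1)) \<le> 1/2"
proof -
  have "((4::real) ^ d)\<^sup>2 = 2 ^ (4 * d)"
    by (simp add: power2_eq_square power_mult flip: power_mult_distrib)
  then have "2 * ((4::real) ^ d)\<^sup>2 = 2 ^ (4 * d + 1)" by simp
  also have "\<dots> \<le> 2 ^ (2 * (p + 2 * d + 1))" by (intro power_increasing) auto
  finally have "((4::real) ^ d)\<^sup>2 \<le> 1/2 * 2 ^ (2 * (p + 2 * d + 1))" by simp
  then show ?thesis by (simp add: power_one_over pos_divide_le_eq)
qed

context centered_iid
begin

lemma borel_measurable_chain_term [measurable]:
  "(\<lambda>w. chain_term q N (\<lambda>a. vdot m w (f a)) k) \<in> borel_measurable (iid m)"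
  by (cases k) (simp_all add: chain_term_def case_prod_beta)

lemma nn_integral_chain_start_le:
  assumes N: "quarter_nets T N" and r: "1 \<le> r"
    and bound: "\<And>x. x \<in> T \<Longrightarrow> vnorm m (f x) \<le> \<Lambda>"
  shows "(\<integral>\<^sup>+ w. ennreal (2 ^ (2 * r) * chain_term (2 * r) N (\<lambda>a. vdot m w (f a)) 0) \<partial>iid m)
    \<le> ennreal (2 ^ (2 * r) * real (card (N 0)) * (mz_const r * \<Lambda>) ^ (2 * r))"
  unfolding chain_term_def using quarter_netsD(1,2)[OF N] bound r
  by (simp, intro nn_integral_sum_abs_vdot_power_le) auto

lemma nn_integral_chain_link_le:
  assumes N: "quarter_nets T N" and card: "\<And>k. real (card (N k)) \<le> C * D ^ k" and r: "1 \<le> r"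
    and lip: "\<And>x y. x \<in> T \<Longrightarrow> y \<in> T \<Longrightarrow> vnorm m (\<lambda>i. f x i - f y i) \<le> \<Lambda> * dist x y"
    and \<Lambda>: "0 \<le> \<Lambda>"
  shows "(\<integral>\<^sup>+ w. ennreal (2 ^ ((Suc j + 1) * (2 * r)) * chain_term (2 * r) N (\<lambda>a. vdot m w (f a)) (Suc j)) \<partial>iid m)
    \<le> ennreal (C\<^sup>2 * (mz_const r * \<Lambda>) ^ (2 * r) * (D * 8 ^ (2 * r) * (D\<^sup>2 * (1/2) ^ (2 * r)) ^ j))"
proof -
  define L where "L = mz_const r"
  define P where "P = chain_pairs N j"
  have LD: "0 \<le> L * \<Lambda>" unfolding L_def using mz_const_ge_1[of r] \<Lambda> by simp
  have P: "finite P" unfolding P_def using N by (rule finite_chain_pairs)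
  have "real (card P) \<le> real (card (N j \<times> N (Suc j)))"
    unfolding P_def chain_pairs_def using quarter_netsD(1)[OF N]
    by (intro of_nat_mono card_mono) auto
  also have "\<dots> \<le> (C * D ^ j) * (C * D ^ (j + 1))"
    using card[of j] card[of "Suc j"] by (simp add: card_cartesian_product mult_mono)
  finally have card_P: "real (card P) \<le> C\<^sup>2 * (D ^ j * D ^ (j + 1))"
    by (simp add: power2_eq_square mult_ac)
  have P_close: "vnorm m (\<lambda>i. f (fst p) i - f (snd p) i) \<le> \<Lambda> * (2 * (1/4) ^ j)" if "p \<in> P" for p
  proof -
    have "fst p \<in> T" "snd p \<in> T" "dist (fst p) (snd p) \<le> 2 * (1/4) ^ j"
      using that quarter_netsD(2)[OF N, of j] quarter_netsD(2)[OF N, of "Suc j"]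
      unfolding P_def chain_pairs_def by auto
    then show ?thesis using lip \<Lambda> by (meson mult_left_mono order_trans)
  qed
  have "(\<integral>\<^sup>+ w. ennreal (2 ^ ((Suc j + 1) * (2 * r)) * chain_term (2 * r) N (\<lambda>a. vdot m w (f a)) (Suc j)) \<partial>iid m)
      = (\<integral>\<^sup>+ w. ennreal (2 ^ ((j + 2) * (2 * r)) *
          (\<Sum>p\<in>P. \<bar>vdot m w (\<lambda>i. f (fst p) i - f (snd p) i)\<bar> ^ (2 * r))) \<partial>iid m)"
    unfolding chain_term_def P_def by (simp add: vdot_diff case_prod_beta)
  also have "\<dots> \<le> ennreal (2 ^ ((j + 2) * (2 * r)) * real (card P) * (L * (\<Lambda> * (2 * (1/4) ^ j))) ^ (2 * r))"
    unfolding L_def using P r P_close by (intro nn_integral_sum_abs_vdot_power_le) auto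
  also have "\<dots> \<le> ennreal (2 ^ ((j + 2) * (2 * r)) * (C\<^sup>2 * (D ^ j * D ^ (j + 1))) *
      (L * (\<Lambda> * (2 * (1/4) ^ j))) ^ (2 * r))"
    using card_P LD by (intro ennreal_leI mult_right_mono mult_left_mono) auto
  also have "\<dots> = ennreal (C\<^sup>2 * (L * \<Lambda>) ^ (2 * r) *
      (2 ^ ((j + 2) * (2 * r)) * (D ^ j * D ^ (j + 1)) * (2 * (1/4) ^ j) ^ (2 * r)))"
    by (simp only: power_mult_distrib mult_ac)
  also have "\<dots> = ennreal (C\<^sup>2 * (L * \<Lambda>) ^ (2 * r) * (D * 8 ^ (2 * r) * (D\<^sup>2 * (1/2) ^ (2 * r)) ^ j))"
    by (simp only: chain_weight_eq)
  finally show ?thesis unfolding L_def .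
qed

lemma nn_integral_chain_term_le:
  assumes N: "quarter_nets T N" and card: "\<And>k. real (card (N k)) \<le> C * D ^ k"
    and C: "1 \<le> C" and D: "1 \<le> D" and ratio: "D\<^sup>2 * (1/2) ^ (2 * r) \<le> 1/2"
    and bound: "\<And>x. x \<in> T \<Longrightarrow> vnorm m (f x) \<le> \<Lambda>"
    and lip: "\<And>x y. x \<in> T \<Longrightarrow> y \<in> T \<Longrightarrow> vnorm m (\<lambda>i. f x i - f y i) \<le> \<Lambda> * dist x y"
    and \<Lambda>: "0 \<le> \<Lambda>"
  shows "(\<integral>\<^sup>+ w. ennreal (2 ^ ((k + 1) * (2 * r)) * chain_term (2 * r) N (\<lambda>a. vdot m w (f a)) k) \<partial>iid m)
    \<le> ennreal (2 * C\<^sup>2 * D * (8 * mz_const r * \<Lambda>) ^ (2 * r) * (1/2) ^ k)"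
proof -
  define L where "L = mz_const r"
  have LD: "0 \<le> L * \<Lambda>" unfolding L_def using mz_const_ge_1[of r] \<Lambda> by simp
  have r: "1 \<le> r" using ratio one_le_power[OF D, of 2] by (cases r) auto
  show ?thesis
  proof (cases k)
    case 0
    have "(\<integral>\<^sup>+ w. ennreal (2 ^ ((k + 1) * (2 * r)) * chain_term (2 * r) N (\<lambda>a. vdot m w (f a)) k) \<partial>iid m)
        \<le> ennreal (2 ^ (2 * r) * real (card (N 0)) * (L * \<Lambda>) ^ (2 * r))"
      using nn_integral_chain_start_le[OF N r bound] unfolding 0 L_def by simp
    also have "\<dots> \<le> ennreal (8 ^ (2 * r) * (2 * C\<^sup>2 * D) * (L * \<Lambda>) ^ (2 * r))"
    proof -
      have "1 \<le> C * D" using mult_mono[OF C D] C by simp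
      then have "C \<le> C * (C * D)" using C by (simp add: mult_le_cancel_left1)
      then have "real (card (N 0)) \<le> 2 * C\<^sup>2 * D" using card[of 0] by (simp add: power2_eq_square mult_ac)
      then have "2 ^ (2 * r) * real (card (N 0)) \<le> 8 ^ (2 * r) * (2 * C\<^sup>2 * D)"
        by (intro mult_mono power_mono) auto
      then show ?thesis using LD by (intro ennreal_leI mult_right_mono) auto
    qed
    also have "\<dots> = ennreal (2 * C\<^sup>2 * D * (8 * L * \<Lambda>) ^ (2 * r) * (1/2) ^ k)"
      unfolding 0 by (simp add: power_mult_distrib mult_ac)
    finally show ?thesis unfolding L_def by (simp add: mult.assoc)
  next
    case (Suc j)
    have "(\<integral>\<^sup>+ w. ennreal (2 ^ ((k + 1) * (2 * r)) * chain_term (2 * r) N (\<lambda>a. vdot m w (f a)) k) \<partial>iid m)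
        \<le> ennreal (C\<^sup>2 * (L * \<Lambda>) ^ (2 * r) * (D * 8 ^ (2 * r) * (D\<^sup>2 * (1/2) ^ (2 * r)) ^ j))"
      unfolding Suc L_def by (rule nn_integral_chain_link_le[OF N card r lip \<Lambda>])
    also have "\<dots> \<le> ennreal (C\<^sup>2 * (L * \<Lambda>) ^ (2 * r) * (D * 8 ^ (2 * r) * (1/2) ^ j))"
      using ratio D LD by (intro ennreal_leI mult_left_mono power_mono) auto
    also have "\<dots> = ennreal (2 * C\<^sup>2 * D * (8 * L * \<Lambda>) ^ (2 * r) * (1/2) ^ k)"
      unfolding Suc by (simp add: power_mult_distrib mult_ac)
    finally show ?thesis unfolding L_def by (simp add: mult.assoc)
  qed
qed

lemma nn_integral_chain_series_le:
  assumes N: "quarter_nets T N" and card: "\<And>k. real (card (N k)) \<le> C * D ^ k"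
    and C: "1 \<le> C" and D: "1 \<le> D" and ratio: "D\<^sup>2 * (1/2) ^ (2 * r) \<le> 1/2"
    and bound: "\<And>x. x \<in> T \<Longrightarrow> vnorm m (f x) \<le> \<Lambda>"
    and lip: "\<And>x y. x \<in> T \<Longrightarrow> y \<in> T \<Longrightarrow> vnorm m (\<lambda>i. f x i - f y i) \<le> \<Lambda> * dist x y"
    and \<Lambda>: "0 \<le> \<Lambda>"
  shows "(\<integral>\<^sup>+ w. (\<Sum>k. ennreal (2 ^ ((k + 1) * (2 * r)) * chain_term (2 * r) N (\<lambda>a. vdot m w (f a)) k)) \<partial>iid m)
    \<le> ennreal (4 * C\<^sup>2 * D * (8 * mz_const r * \<Lambda>) ^ (2 * r))"
proof -
  define K where "K = 2 * C\<^sup>2 * D * (8 * mz_const r * \<Lambda>) ^ (2 * r)"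
  have K: "0 \<le> K" unfolding K_def using C D \<Lambda> mz_const_ge_1[of r] by simp
  have "(\<integral>\<^sup>+ w. (\<Sum>k. ennreal (2 ^ ((k + 1) * (2 * r)) * chain_term (2 * r) N (\<lambda>a. vdot m w (f a)) k)) \<partial>iid m)
      = (\<Sum>k. \<integral>\<^sup>+ w. ennreal (2 ^ ((k + 1) * (2 * r)) * chain_term (2 * r) N (\<lambda>a. vdot m w (f a)) k) \<partial>iid m)"
    by (rule nn_integral_suminf) measurable
  also have "\<dots> \<le> (\<Sum>k. ennreal (K * (1/2) ^ k))"
    unfolding K_def using assms by (intro suminf_le summableI nn_integral_chain_term_le)
  also have "\<dots> = ennreal (K * 2)"
    using K geometric_sums[of "1/2::real"] by (intro suminf_ennreal_eq sums_mult) auto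
  finally show ?thesis unfolding K_def by (simp add: mult_ac)
qed

lemma sup_abs_vdot_power_bounded:
  fixes T :: "'a::euclidean_space set"
  assumes T: "bounded T" and \<Lambda>: "0 \<le> \<Lambda>"
  obtains B where "\<And>m f. (\<And>x. x \<in> T \<Longrightarrow> vnorm m (f x) \<le> \<Lambda>) \<Longrightarrow>
      (\<And>x y. x \<in> T \<Longrightarrow> y \<in> T \<Longrightarrow> vnorm m (\<lambda>i. f x i - f y i) \<le> \<Lambda> * dist x y) \<Longrightarrow>
      (\<integral>\<^sup>+ w. (SUP x\<in>T. ennreal (\<bar>vdot m w (f x)\<bar> ^ p)) \<partial>iid m) \<le> ennreal B"
proof -
  obtain N C where N: "quarter_nets T N" and C: "1 \<le> C"
    and card: "\<And>k. real (card (N k)) \<le> C * (4 ^ DIM('a)) ^ k"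
    using bounded_imp_quarter_nets[OF T] by blast
  define D :: real where "D = 4 ^ DIM('a)"
  define r where "r = p + 2 * DIM('a) + 1"
  \<comment> \<open>\<open>2 r \<ge> p\<close>, and \<open>2 r > 4 DIM('a)\<close> makes the chaining series converge\<close>
  have p: "p \<le> 2 * r" and D: "1 \<le> D" unfolding r_def D_def by simp_all
  have ratio: "D\<^sup>2 * (1/2) ^ (2 * r) \<le> 1/2"
    unfolding D_def r_def by (rule four_power_square_half_power_le)
  show ?thesis
  proof
    fix m f
    assume bound: "\<And>x. x \<in> T \<Longrightarrow> vnorm m (f x) \<le> \<Lambda>"
      and lip: "\<And>x y. x \<in> T \<Longrightarrow> y \<in> T \<Longrightarrow> vnorm m (\<lambda>i. f x i - f y i) \<le> \<Lambda> * dist x y"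
    interpret prob_space "iid m" by (rule prob_space_iid)
    define G where "G w = (\<Sum>k. ennreal (2 ^ ((k + 1) * (2 * r)) * chain_term (2 * r) N (\<lambda>a. vdot m w (f a)) k))" for w
    have "(\<integral>\<^sup>+ w. (SUP x\<in>T. ennreal (\<bar>vdot m w (f x)\<bar> ^ p)) \<partial>iid m) \<le> (\<integral>\<^sup>+ w. 1 + G w \<partial>iid m)"
      unfolding G_def using N p lip \<Lambda> by (intro nn_integral_mono sup_abs_vdot_power_le_chain_series)
    also have "\<dots> = 1 + (\<integral>\<^sup>+ w. G w \<partial>iid m)"
      unfolding G_def by (subst nn_integral_add) (auto simp: emeasure_space_1)
    also have "\<dots> \<le> 1 + ennreal (4 * C\<^sup>2 * D * (8 * mz_const r * \<Lambda>) ^ (2 * r))"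
      unfolding G_def using N card[folded D_def] C D ratio bound lip \<Lambda>
      by (intro add_left_mono nn_integral_chain_series_le)
    finally show "(\<integral>\<^sup>+ w. (SUP x\<in>T. ennreal (\<bar>vdot m w (f x)\<bar> ^ p)) \<partial>iid m)
        \<le> ennreal (1 + 4 * C\<^sup>2 * D * (8 * mz_const r * \<Lambda>) ^ (2 * r))"
      using C D \<Lambda> mz_const_ge_1[of r] by (simp add: ennreal_plus)
  qed
qed

end

theorem lemma11:
  fixes p :: nat and \<mu> :: "real measure" and T0 :: "'a::euclidean_space set" and lam :: real
  assumes "even p" and "p \<ge> 2"
    and "prob_space \<mu>" and "sets \<mu> = sets borel"
    and "(\<integral>x. x \<partial>\<mu>) = 0"
    and "\<forall>k::nat. integrable \<mu> (\<lambda>x. \<bar>x\<bar> ^ k)"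
    and "compact T0"
  shows "\<exists>C::real. \<forall>m1::nat. \<forall>f :: 'a \<Rightarrow> nat \<Rightarrow> real.
           m1 \<ge> 1 \<longrightarrow> c01_norm T0 m1 f \<le> ennreal lam \<longrightarrow>
           (\<integral>\<^sup>+ w. (SUP y\<in>f ` T0. ennreal (\<bar>vdot m1 w y\<bar> ^ p)) \<partial>(PiM {..<m1} (\<lambda>_. \<mu>)))
             \<le> ennreal C"
proof -
  interpret centered_iid \<mu> by (rule centered_iid.intro) (use assms(3-6) in auto)
  have "bounded T0" using assms(7) by (rule compact_imp_bounded)
  moreover have "0 \<le> max lam 0" by simp
  ultimately obtain C where C: "\<And>m f. (\<And>x. x \<in> T0 \<Longrightarrow> vnorm m (f x) \<le> max lam 0) \<Longrightarrow>
      (\<And>x y. x \<in> T0 \<Longrightarrow> y \<in> T0 \<Longrightarrow> vnorm m (\<lambda>i. f x i - f y i) \<le> max lam 0 * dist x y) \<Longrightarrow>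
      (\<integral>\<^sup>+ w. (SUP x\<in>T0. ennreal (\<bar>vdot m w (f x)\<bar> ^ p)) \<partial>iid m) \<le> ennreal C"
    using sup_abs_vdot_power_bounded[where p = p] by blast
  show ?thesis
  proof (intro exI[of _ C] allI impI)
    fix m1 f assume "c01_norm T0 m1 f \<le> ennreal lam"
    from C[OF c01_norm_leD[OF this]]
    show "(\<integral>\<^sup>+ w. (SUP y\<in>f ` T0. ennreal (\<bar>vdot m1 w y\<bar> ^ p)) \<partial>(PiM {..<m1} (\<lambda>_. \<mu>))) \<le> ennreal C"
      by (simp add: image_comp)
  qed
qed

end
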